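(* The class $\mathcal{S}_d$ is not closed under asymptotic equivalence: there exist density functions $p_1,p_2$ on $\mathbb{R}$ and a constant $c>0$ such that $p_1\in\mathcal{S}_d$, $p_2\notin\mathcal{S}_d$, and $p_2(x)\sim c\,p_1(x)$.
   Context: For positive functions $f,g$ defined on some $[a,\infty)$, $f(x)\sim g(x)$ means $\lim_{x\to\infty}f(x)/g(x)=1$. A density function is a measurable $g:\mathbb{R}\to[0,\infty)$ with $\int_{-\infty}^{\infty} g=1$. For integrable $f,g$, $f\otimes g(x):=\int_{-\infty}^{\infty} f(x-u)g(u)\,du$. The class $\mathbf{L}$ consists of nonnegative measurable $g$ on $\mathbb{R}$ with $g(x)>0$ for all sufficiently large $x$ and $g(x+a)\sim g(x)$ for every $a\in\mathbb{R}$. $\mathcal{L}_d$ is the set of density functions in $\mathbf{L}$; $\mathcal{S}_d$ is the set of $g\in\mathcal{L}_d$ with $g\otimes g(x)\sim 2g(x)$. A class $\mathcal{C}$ of density functions is closed under asymptotic equivalence if $p_1\in\mathcal{C}$, $p_2$ a density function, and $p_2(x)\sim c\,p_1(x)$ for some $c>0$ imply $p_2\in\mathcal{C}$. *)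

theory Defs
  imports "HOL-Analysis.Analysis"
begin

definition asymp_eq :: "(real \<Rightarrow> real) \<Rightarrow> (real \<Rightarrow> real) \<Rightarrow> bool" where
  "asymp_eq f g \<longleftrightarrow> ((\<lambda>x. f x / g x) \<longlongrightarrow> 1) at_top"

definition density_fun :: "(real \<Rightarrow> real) \<Rightarrow> bool" where
  "density_fun g \<longleftrightarrow> g \<in> borel_measurable lborel \<and> (\<forall>x. 0 \<le> g x)
     \<and> integrable lborel g \<and> integral\<^sup>L lborel g = 1"

definition conv :: "(real \<Rightarrow> real) \<Rightarrow> (real \<Rightarrow> real) \<Rightarrow> real \<Rightarrow> real" where
  "conv f g x = (\<integral>u. f (x - u) * g u \<partial>lborel)"

definition class_L :: "(real \<Rightarrow> real) set" where
  "class_L = {g. g \<in> borel_measurable lborel \<and> (\<forall>x. 0 \<le> g x)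
     \<and> (\<forall>\<^sub>F x in at_top. g x > 0)
     \<and> (\<forall>a::real. asymp_eq (\<lambda>x. g (x + a)) g)}"

definition L_d :: "(real \<Rightarrow> real) set" where
  "L_d = {g. density_fun g \<and> g \<in> class_L}"

definition S_d :: "(real \<Rightarrow> real) set" where
  "S_d = {g. g \<in> L_d \<and> asymp_eq (conv g g) (\<lambda>x. 2 * g x)}"

end

theory Submission
  imports Defs "HOL-Real_Asymp.Real_Asymp"
begin

text \<open>
  Take the density \<open>p\<^sub>1 \<propto> (1 + t)\<^bsup>osc t - 7\<^esup>\<close> on \<open>[0, \<infinity>)\<close>, where
  \<open>osc t = (1 - cos \<surd>t) / 2\<close> oscillates ever more slowly between 0 and 1. It is long-tailed,
  and a drop of the exponent over a distance \<open>m\<close> costs at most a factor \<open>O((1 + m)\<^sup>4)\<close>, so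
  \<open>p\<^sub>1(u) p\<^sub>1(x - u) / p\<^sub>1(x)\<close> has the integrable majorant \<open>O((1 + u)\<^sup>-\<^sup>2)\<close> on \<open>0 \<le> u \<le> x/2\<close>;
  dominated convergence then gives \<open>p\<^sub>1 \<otimes> p\<^sub>1 \<sim> 2 p\<^sub>1\<close>.
  Now let \<open>p\<^sub>2 = (p\<^sub>1 + q) / 2\<close> with a left tail \<open>q(t) = (1 - t)\<^sup>-\<^sup>2\<close> on \<open>t \<le> 0\<close>, so that
  \<open>p\<^sub>2 = p\<^sub>1 / 2\<close> on \<open>(0, \<infinity>)\<close>. At a trough \<open>x = (2\<pi>n)\<^sup>2\<close>, where \<open>p\<^sub>1(x) \<asymp> x\<^sup>-\<^sup>7\<close>, the left tail
  reaches back to the neighbouring peak at distance \<open>\<asymp> n\<close> where \<open>p\<^sub>1 \<asymp> x\<^bsup>-25/4\<^esup>\<close>, giving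
  \<open>p\<^sub>2 \<otimes> p\<^sub>2(x) / p\<^sub>2(x) \<gtrsim> n \<cdot> n\<^sup>-\<^sup>2 \<cdot> n\<^bsup>-25/2\<^esup> \<cdot> n\<^bsup>14\<^esup> = \<surd>n \<rightarrow> \<infinity>\<close>.
\<close>

section \<open>Criteria for membership in \<open>S_d\<close>\<close>

locale dominated_long_tail =
  fixes g e :: "real \<Rightarrow> real"
  assumes density: "density_fun g"
    and vanishes_neg: "\<And>u. u < 0 \<Longrightarrow> g u = 0"
    and pos: "\<And>x. 0 \<le> x \<Longrightarrow> 0 < g x"
    and long_tailed: "\<And>a. ((\<lambda>x. g (x + a) / g x) \<longlongrightarrow> 1) at_top"
    and majorant_integrable: "integrable lborel e"
    and majorant: "\<And>x u. 0 \<le> u \<Longrightarrow> 2 * u \<le> x \<Longrightarrow> g u * g (x - u) / g x \<le> e u"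
begin

lemma g_measurable [measurable]: "g \<in> borel_measurable borel"
  using density by (simp add: density_fun_def)

lemma g_nonneg: "0 \<le> g x"
  using density by (simp add: density_fun_def)

definition half_conv_ratio :: "real \<Rightarrow> real \<Rightarrow> real" where
  "half_conv_ratio x u = indicator {..x/2} u * (g u * g (x - u) / g x)"

lemma half_conv_ratio_measurable [measurable]: "half_conv_ratio x \<in> borel_measurable borel"
  unfolding half_conv_ratio_def by measurable

lemma abs_half_conv_ratio_le: "\<bar>half_conv_ratio x u\<bar> \<le> \<bar>e u\<bar>"
proof (cases "0 \<le> u \<and> 2 * u \<le> x")
  case True
  then have "0 \<le> g u * g (x - u) / g x" "g u * g (x - u) / g x \<le> e u"
    using g_nonneg majorant by auto
  then show ?thesis
    using True by (simp add: half_conv_ratio_def)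
next
  case False
  then have "half_conv_ratio x u = 0"
    by (auto simp: half_conv_ratio_def vanishes_neg)
  then show ?thesis by simp
qed

lemma half_conv_ratio_integrable: "integrable lborel (half_conv_ratio x)"
  using integrable_abs[OF majorant_integrable]
  by (rule Bochner_Integration.integrable_bound) (auto intro!: AE_I2 abs_half_conv_ratio_le)

lemma half_conv_ratio_tendsto: "((\<lambda>x. half_conv_ratio x u) \<longlongrightarrow> g u) at_top"
proof (cases "u < 0")
  case True
  then show ?thesis by (simp add: half_conv_ratio_def vanishes_neg)
next
  case False
  have "\<forall>\<^sub>F x in at_top. g u * (g (x + - u) / g x) = half_conv_ratio x u"
    using eventually_ge_at_top[of "2 * u"]
    by eventually_elim (simp add: half_conv_ratio_def)
  moreover have "((\<lambda>x. g u * (g (x + - u) / g x)) \<longlongrightarrow> g u * 1) at_top"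
    by (intro tendsto_intros long_tailed)
  ultimately show ?thesis
    by (simp add: tendsto_cong)
qed

lemma integral_half_conv_ratio_tendsto:
  "((\<lambda>x. integral\<^sup>L lborel (half_conv_ratio x)) \<longlongrightarrow> 1) at_top"
proof -
  have "((\<lambda>x. integral\<^sup>L lborel (half_conv_ratio x)) \<longlongrightarrow> integral\<^sup>L lborel g) at_top"
    using majorant_integrable
    by (intro integral_dominated_convergence_at_top[where w = "\<lambda>u. \<bar>e u\<bar>"] always_eventually allI AE_I2)
       (auto intro: half_conv_ratio_tendsto abs_half_conv_ratio_le)
  then show ?thesis
    using density by (simp add: density_fun_def)
qed

text \<open>The integrand \<open>g u g (x - u) / g x\<close> is symmetric under \<open>u \<mapsto> x - u\<close>, and the two halves
  \<open>u < x/2\<close>, \<open>u > x/2\<close> are exchanged by this reflection; the midpoint is a null set.\<close>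

lemma conv_ratio_eq: assumes "0 \<le> x"
  shows "conv g g x / (2 * g x) = integral\<^sup>L lborel (half_conv_ratio x)"
proof -
  have ae: "AE u in lborel. g (x - u) * g u / (2 * g x)
          = (half_conv_ratio x u + half_conv_ratio x (x + (-1) * u)) / 2"
    using AE_lborel_singleton[of "x / 2"]
    by eventually_elim (auto simp: half_conv_ratio_def indicator_def mult.commute)
  have "conv g g x / (2 * g x)
      = (\<integral>u. (half_conv_ratio x u + half_conv_ratio x (x + (-1) * u)) / 2 \<partial>lborel)"
    unfolding conv_def integral_divide_zero[symmetric] by (intro integral_cong_AE[OF _ _ ae]) simp_all
  also have "\<dots> = (integral\<^sup>L lborel (half_conv_ratio x)
      + (\<integral>u. half_conv_ratio x (x + (-1) * u) \<partial>lborel)) / 2"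
    using half_conv_ratio_integrable lborel_integrable_real_affine[OF half_conv_ratio_integrable, of "-1" x]
    by simp
  also have "(\<integral>u. half_conv_ratio x (x + (-1) * u) \<partial>lborel) = integral\<^sup>L lborel (half_conv_ratio x)"
    using lborel_integral_real_affine[of "-1" "half_conv_ratio x" x] by simp
  finally show ?thesis by simp
qed

lemma in_S_d: "g \<in> S_d"
  unfolding S_d_def L_d_def class_L_def
proof (intro CollectI conjI allI density)
  show "g \<in> borel_measurable lborel" "0 \<le> g x" for x
    by (simp_all add: g_nonneg)
  show "\<forall>\<^sub>F x in at_top. 0 < g x"
    using eventually_ge_at_top[of 0] by eventually_elim (rule pos)
  show "asymp_eq (\<lambda>x. g (x + a)) g" for a
    unfolding asymp_eq_def by (rule long_tailed)
  have "\<forall>\<^sub>F x in at_top. integral\<^sup>L lborel (half_conv_ratio x) = conv g g x / (2 * g x)"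
    using eventually_ge_at_top[of 0] by eventually_elim (simp add: conv_ratio_eq)
  with integral_half_conv_ratio_tendsto show "asymp_eq (conv g g) (\<lambda>x. 2 * g x)"
    unfolding asymp_eq_def by (rule Lim_transform_eventually)
qed

end

lemma not_in_S_d_if_conv_ratio_unbounded:
  assumes "filterlim x at_top sequentially"
    and "filterlim (\<lambda>n. conv g g (x n) / (2 * g (x n))) at_top sequentially"
  shows "g \<notin> S_d"
proof
  assume "g \<in> S_d"
  then have "((\<lambda>y. conv g g y / (2 * g y)) \<longlongrightarrow> 1) at_top"
    by (simp add: S_d_def asymp_eq_def)
  then have "((\<lambda>n. conv g g (x n) / (2 * g (x n))) \<longlongrightarrow> 1) sequentially"
    using assms(1) by (rule filterlim_compose)
  then have "\<forall>\<^sub>F n in sequentially. conv g g (x n) / (2 * g (x n)) < 2"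
    by (rule order_tendstoD) simp
  moreover have "\<forall>\<^sub>F n in sequentially. 2 \<le> conv g g (x n) / (2 * g (x n))"
    using assms(2) by (simp add: filterlim_at_top)
  ultimately have "\<forall>\<^sub>F n in sequentially. False"
    by eventually_elim simp
  then show False by simp
qed

lemma integrable_conv_integrand:
  fixes g :: "real \<Rightarrow> real"
  assumes "integrable lborel g" and "\<And>y. \<bar>g y\<bar> \<le> B"
  shows "integrable lborel (\<lambda>u. g (x - u) * g u)"
proof (rule Bochner_Integration.integrable_bound)
  show "integrable lborel (\<lambda>u. B * g u)"
    using assms(1) by simp
  have [measurable]: "g \<in> borel_measurable borel"
    using assms(1) by auto
  show "(\<lambda>u. g (x - u) * g u) \<in> borel_measurable lborel"
    by simp
  show "AE u in lborel. norm (g (x - u) * g u) \<le> norm (B * g u)"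
  proof (rule AE_I2)
    fix u
    have "\<bar>g (x - u)\<bar> * \<bar>g u\<bar> \<le> \<bar>B\<bar> * \<bar>g u\<bar>"
      using assms(2)[of "x - u"] by (intro mult_right_mono) auto
    then show "norm (g (x - u) * g u) \<le> norm (B * g u)"
      by (simp add: abs_mult)
  qed
qed

lemma conv_ge_on_interval:
  fixes g :: "real \<Rightarrow> real"
  assumes "integrable lborel g" and "\<And>y. \<bar>g y\<bar> \<le> B" and "\<And>y. 0 \<le> g y" and "l \<le> r"
    and "\<And>u. l \<le> u \<Longrightarrow> u \<le> r \<Longrightarrow> c \<le> g (x - u) * g u"
  shows "c * (r - l) \<le> conv g g x"
proof -
  have "c * (r - l) = (\<integral>u. indicator {l..r} u * c \<partial>lborel)"
    using assms(4) by simp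
  also have "\<dots> \<le> conv g g x"
    unfolding conv_def using assms
    by (intro integral_mono integrable_conv_integrand integrable_mult_left integrable_real_indicator)
       (auto simp: emeasure_lborel_Icc_eq indicator_def)
  finally show ?thesis .
qed

section \<open>A long-tailed density with slowly oscillating exponent\<close>

lemma abs_cos_diff_le: "\<bar>cos a - cos b\<bar> \<le> \<bar>a - b :: real\<bar>"
proof -
  have "\<bar>cos a - cos b\<bar> = 2 * \<bar>sin ((a + b) / 2)\<bar> * \<bar>sin ((b - a) / 2)\<bar>"
    by (simp add: cos_diff_cos abs_mult)
  also have "\<dots> \<le> 2 * 1 * \<bar>(b - a) / 2\<bar>"
    by (intro mult_mono abs_sin_x_le_abs_x) auto
  finally show ?thesis by simp
qed

lemma abs_sqrt_diff_le:
  assumes "0 < x" "0 \<le> y"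
  shows "\<bar>sqrt y - sqrt x\<bar> \<le> \<bar>y - x\<bar> / sqrt x"
proof -
  have "(sqrt y - sqrt x) * (sqrt y + sqrt x) = y - x"
    using assms by (simp add: algebra_simps)
  then have "\<bar>sqrt y - sqrt x\<bar> * (sqrt y + sqrt x) = \<bar>y - x\<bar>"
    using assms by (metis abs_mult abs_of_nonneg add_nonneg_nonneg real_sqrt_ge_zero less_imp_le)
  moreover have "\<bar>sqrt y - sqrt x\<bar> * sqrt x \<le> \<bar>sqrt y - sqrt x\<bar> * (sqrt y + sqrt x)"
    using assms by (intro mult_left_mono) auto
  ultimately show ?thesis
    using assms by (simp add: field_simps)
qed

lemma cos_le_minus_half:
  assumes "2 * pi / 3 \<le> y" "y \<le> 4 * pi / 3"
  shows "cos y \<le> - 1 / 2"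
proof -
  have "\<bar>y - pi\<bar> \<le> pi / 3"
    using assms by (simp only: abs_le_iff) linarith
  then have "cos (pi / 3) \<le> cos \<bar>y - pi\<bar>"
    by (intro cos_monotone_0_pi_le) auto
  also have "cos \<bar>y - pi\<bar> = - cos y"
    by (simp add: abs_if)
  finally show ?thesis
    by (simp add: cos_60)
qed

definition pareto :: "real \<Rightarrow> real" where
  "pareto t = indicator {1..} t * t powr -2"

lemma pareto_measurable [measurable]: "pareto \<in> borel_measurable borel"
  unfolding pareto_def by measurable

lemma pareto_nonneg: "0 \<le> pareto t"
  by (simp add: pareto_def)

lemma pareto_shift: "0 \<le> t \<Longrightarrow> pareto (1 + t) = exp (-2 * ln (1 + t))"
  by (simp add: pareto_def powr_def)

lemma integrable_pareto: "integrable lborel pareto"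
  and integral_pareto: "integral\<^sup>L lborel pareto = 1"
proof -
  have int: "((\<lambda>x::real. x powr -2) has_integral 1) {1..}"
    using has_integral_powr_to_inf[of "-2" 1] by simp
  then have abs_int: "(\<lambda>x::real. x powr -2) absolutely_integrable_on {1..}"
    by (intro nonnegative_absolutely_integrable_1) (auto simp: integrable_on_def)
  then show "integrable lborel pareto"
    unfolding pareto_def[abs_def] set_integrable_def
    by (subst (asm) integrable_completion) auto
  have "(LINT x:{1..} | lebesgue. (x::real) powr -2) = 1"
    using set_lebesgue_integral_eq_integral(2)[OF abs_int] int by (simp add: integral_unique)
  then show "integral\<^sup>L lborel pareto = 1"
    unfolding pareto_def[abs_def] set_lebesgue_integral_def
    by (subst (asm) integral_completion) auto
qed

lemma pareto_le_1: "pareto t \<le> 1"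
proof (cases "1 \<le> t")
  case True
  then have "t powr -2 \<le> 1 powr -2"
    by (intro powr_mono2') auto
  then show ?thesis
    using True by (simp add: pareto_def)
qed (simp add: pareto_def)

lemma integrable_pareto_affine: "c \<noteq> 0 \<Longrightarrow> integrable lborel (\<lambda>t. pareto (b + c * t))"
  by (rule lborel_integrable_real_affine[OF integrable_pareto])

definition osc :: "real \<Rightarrow> real" where
  "osc t = (1 - cos (sqrt t)) / 2"

definition osc_log :: "real \<Rightarrow> real" where
  "osc_log t = osc t * ln (1 + t)"

text \<open>For \<open>t \<ge> 0\<close> this is \<open>(1 + t) powr (osc t - 7)\<close>.\<close>

definition osc_tail :: "real \<Rightarrow> real" where
  "osc_tail t = (if t < 0 then 0 else exp (osc_log t - 7 * ln (1 + t)))"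

lemma osc_nonneg: "0 \<le> osc t" and osc_le_1: "osc t \<le> 1"
  by (simp_all add: osc_def)

lemma abs_osc_diff_le:
  assumes "0 < x" "0 \<le> y"
  shows "\<bar>osc y - osc x\<bar> \<le> \<bar>y - x\<bar> / (2 * sqrt x)"
  using abs_cos_diff_le[of "sqrt x" "sqrt y"] abs_sqrt_diff_le[OF assms]
  by (simp add: osc_def abs_minus_commute field_simps)

lemma osc_log_nonneg: "0 \<le> t \<Longrightarrow> 0 \<le> osc_log t"
  by (simp add: osc_log_def osc_nonneg)

lemma osc_log_le: "0 \<le> t \<Longrightarrow> osc_log t \<le> ln (1 + t)"
  unfolding osc_log_def using osc_nonneg[of t] osc_le_1[of t]
  by (intro mult_left_le_one_le) auto

lemma osc_tail_measurable [measurable]: "osc_tail \<in> borel_measurable borel"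
  unfolding osc_tail_def osc_log_def osc_def by measurable

lemma osc_tail_pos: "0 \<le> t \<Longrightarrow> 0 < osc_tail t"
  by (simp add: osc_tail_def)

lemma osc_tail_nonneg: "0 \<le> osc_tail t"
  by (simp add: osc_tail_def)

lemma osc_tail_le_pareto: "osc_tail t \<le> pareto (1 + t)"
proof (cases "t < 0")
  case True
  then show ?thesis by (simp add: osc_tail_def pareto_nonneg)
next
  case False
  then have "0 \<le> ln (1 + t)" "osc_log t \<le> ln (1 + t)"
    by (simp_all add: osc_log_le)
  then have "osc_log t - 7 * ln (1 + t) \<le> -2 * ln (1 + t)"
    by linarith
  then show ?thesis
    using False by (simp add: osc_tail_def pareto_shift)
qed

lemma osc_tail_le_1: "osc_tail t \<le> 1"
proof (cases "t < 0")
  case False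
  then have "0 \<le> ln (1 + t)" "osc_log t \<le> ln (1 + t)"
    by (simp_all add: osc_log_le)
  then have "osc_log t - 7 * ln (1 + t) \<le> 0"
    by linarith
  then show ?thesis
    using False by (simp add: osc_tail_def)
qed (simp add: osc_tail_def)

lemma integrable_osc_tail: "integrable lborel osc_tail"
  using integrable_pareto_affine[of 1 1]
  by (rule Bochner_Integration.integrable_bound)
     (auto intro!: AE_I2 order_trans[OF osc_tail_le_pareto] simp: osc_tail_nonneg)

definition osc_mass :: real where
  "osc_mass = integral\<^sup>L lborel osc_tail"

lemma osc_mass_pos: "0 < osc_mass"
proof -
  have "(\<integral>t. indicator {0..1} (t::real) * exp (- 7 * ln 2) \<partial>lborel) \<le> osc_mass"
    unfolding osc_mass_def
  proof (rule Bochner_Integration.integral_mono)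
    show "integrable lborel osc_tail"
      by (rule integrable_osc_tail)
    show "integrable lborel (\<lambda>t. indicator {0..1::real} t * exp (- 7 * ln (2::real)))"
      by (intro integrable_mult_left integrable_real_indicator) auto
    show "indicator {0..1} t * exp (- 7 * ln 2) \<le> osc_tail t" for t
    proof (cases "t \<in> {0..1}")
      case True
      then have "osc_log t \<ge> 0" "ln (1 + t) \<le> ln 2"
        using osc_log_nonneg[of t] by simp_all
      then have "- 7 * ln 2 \<le> osc_log t - 7 * ln (1 + t)"
        by linarith
      then show ?thesis
        using True by (simp add: osc_tail_def)
    qed (simp add: osc_tail_nonneg)
  qed
  then show ?thesis
    by (simp add: less_le_trans[OF exp_gt_zero])
qed

lemma abs_osc_log_shift_le:
  assumes "0 < x" "0 \<le> x + a"
  shows "\<bar>osc_log (x + a) - osc_log x\<bar>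
    \<le> \<bar>a\<bar> / (2 * sqrt x) * ln (1 + x + \<bar>a\<bar>) + \<bar>ln (1 + (x + a)) - ln (1 + x)\<bar>"
proof -
  have "osc_log (x + a) - osc_log x
      = (osc (x + a) - osc x) * ln (1 + (x + a)) + osc x * (ln (1 + (x + a)) - ln (1 + x))"
    by (simp add: osc_log_def algebra_simps)
  moreover have "\<bar>(osc (x + a) - osc x) * ln (1 + (x + a))\<bar> \<le> \<bar>a\<bar> / (2 * sqrt x) * ln (1 + x + \<bar>a\<bar>)"
    unfolding abs_mult using assms abs_osc_diff_le[of x "x + a"] by (intro mult_mono) auto
  moreover have "\<bar>osc x * (ln (1 + (x + a)) - ln (1 + x))\<bar> \<le> \<bar>ln (1 + (x + a)) - ln (1 + x)\<bar>"
    unfolding abs_mult using osc_nonneg[of x] osc_le_1[of x] by (intro mult_left_le_one_le) auto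
  ultimately show ?thesis by linarith
qed

lemma osc_tail_long_tailed: "((\<lambda>x. osc_tail (x + a) / osc_tail x) \<longlongrightarrow> 1) at_top"
proof -
  have dist_log: "((\<lambda>x. ln (1 + (x + a)) - ln (1 + x)) \<longlongrightarrow> 0) at_top"
    by real_asymp
  have "((\<lambda>x. osc_log (x + a) - osc_log x) \<longlongrightarrow> 0) at_top"
  proof (rule Lim_null_comparison)
    show "\<forall>\<^sub>F x in at_top. norm (osc_log (x + a) - osc_log x)
        \<le> \<bar>a\<bar> / (2 * sqrt x) * ln (1 + x + \<bar>a\<bar>) + \<bar>ln (1 + (x + a)) - ln (1 + x)\<bar>"
      using eventually_ge_at_top[of "max 1 (1 - a)"]
    proof eventually_elim
      case (elim x)
      then show ?case
        using abs_osc_log_shift_le[of x a] by simp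
    qed
    have "((\<lambda>x. \<bar>a\<bar> / (2 * sqrt x) * ln (1 + x + \<bar>a\<bar>)) \<longlongrightarrow> 0) at_top"
      by real_asymp
    from tendsto_add[OF this tendsto_rabs_zero[OF dist_log]]
    show "((\<lambda>x. \<bar>a\<bar> / (2 * sqrt x) * ln (1 + x + \<bar>a\<bar>) + \<bar>ln (1 + (x + a)) - ln (1 + x)\<bar>) \<longlongrightarrow> 0) at_top"
      by simp
  qed
  from tendsto_exp[OF tendsto_diff[OF this tendsto_mult_right_zero[OF dist_log, of 7]]]
  have "((\<lambda>x. exp ((osc_log (x + a) - osc_log x) - 7 * (ln (1 + (x + a)) - ln (1 + x)))) \<longlongrightarrow> 1) at_top"
    by simp
  moreover have "\<forall>\<^sub>F x in at_top. exp ((osc_log (x + a) - osc_log x) - 7 * (ln (1 + (x + a)) - ln (1 + x)))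
      = osc_tail (x + a) / osc_tail x"
    using eventually_ge_at_top[of "max 0 (- a)"]
    by eventually_elim (simp add: osc_tail_def exp_diff exp_add algebra_simps)
  ultimately show ?thesis
    by (rule Lim_transform_eventually)
qed

lemma osc_log_decrease_le:
  assumes "0 < M" "0 \<le> m"
  shows "osc_log M - osc_log (M + m) \<le> m / (2 * sqrt M) * ln (1 + M)"
proof -
  have "osc_log M - osc_log (M + m) \<le> (osc M - osc (M + m)) * ln (1 + M)"
    using assms osc_nonneg[of "M + m"]
    by (simp add: osc_log_def algebra_simps mult_left_mono)
  also have "\<dots> \<le> m / (2 * sqrt M) * ln (1 + M)"
    using assms abs_osc_diff_le[of M "M + m"] by (intro mult_right_mono) auto
  finally show ?thesis .
qed

text \<open>Over a distance \<open>m\<close>, the exponent \<open>osc_log\<close> drops by at most \<open>4 + 4 ln (1 + m)\<close>: either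
  \<open>ln (1 + M) \<le> 4 ln (1 + m)\<close> and the trivial bound suffices, or \<open>m < (1 + M)\<^bsup>1/4\<^esup>\<close> and the slow
  oscillation of \<open>osc\<close> near \<open>M\<close> takes over.\<close>

lemma osc_log_drop_le:
  assumes "0 \<le> m" "0 \<le> M"
  shows "osc_log M - osc_log (M + m) \<le> 4 + 4 * ln (1 + m)"
proof -
  have trivial: "osc_log M - osc_log (M + m) \<le> ln (1 + M)"
    using osc_log_le[of M] osc_log_nonneg[of "M + m"] assms by linarith
  have "0 \<le> ln (1 + m)"
    using assms by simp
  consider "ln (1 + M) \<le> 4 * ln (1 + m)" | "M \<le> 1"
    | "1 < M" "4 * ln (1 + m) < ln (1 + M)" by linarith
  then show ?thesis
  proof cases
    case 2
    then have "ln (1 + M) \<le> ln 2"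
      using assms by simp
    then show ?thesis
      using trivial \<open>0 \<le> ln (1 + m)\<close> ln_2_less_1 by linarith
  next
    case 3
    define y where "y = 1 + M"
    have "ln (1 + m) < ln (y powr (1/4))"
      using 3 by (simp add: y_def)
    then have m_le: "m \<le> y powr (1/4)"
      using assms y_def by (subst (asm) ln_less_cancel_iff) auto
    have "ln y \<le> 4 * y powr (1/4)"
      using ln_powr_bound[of y "1/4"] assms by (simp add: y_def)
    then have "m * ln y \<le> y powr (1/4) * (4 * y powr (1/4))"
      using m_le assms y_def by (intro mult_mono) auto
    also have "\<dots> = 4 * sqrt y"
      using assms y_def by (simp add: powr_half_sqrt flip: powr_add)
    finally have "m * ln y \<le> 4 * sqrt y" .
    moreover have "sqrt y \<le> sqrt (4 * M)"
      using 3 by (simp add: y_def)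
    then have "sqrt y \<le> 2 * sqrt M"
      by (simp add: real_sqrt_mult)
    ultimately have "m / (2 * sqrt M) * ln y \<le> 4"
      using 3 by (simp add: field_simps)
    then show ?thesis
      using osc_log_decrease_le[of M m] 3 assms \<open>0 \<le> ln (1 + m)\<close> unfolding y_def by linarith
  qed (use trivial in linarith)
qed

lemma osc_tail_conv_majorant:
  assumes u: "0 \<le> u" and ux: "2 * u \<le> x"
  shows "osc_tail u * osc_tail (x - u) / osc_tail x \<le> exp (4 + 7 * ln 2) * pareto (1 + u)"
proof -
  obtain M where M: "x = M + u" "u \<le> M"
    using ux by (intro that[of "x - u"]) auto
  have "ln (1 + (M + u)) \<le> ln (2 * (1 + M))"
    using M u by simp
  also have "\<dots> = ln 2 + ln (1 + M)"
    using ln_mult[of 2 "1 + M"] M u by simp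
  finally have "(osc_log u - 7 * ln (1 + u)) + (osc_log M - 7 * ln (1 + M))
      - (osc_log (M + u) - 7 * ln (1 + (M + u))) \<le> (4 + 7 * ln 2) + -2 * ln (1 + u)"
    using osc_log_le[OF u] osc_log_drop_le[of u M] M u by linarith
  then have "exp ((osc_log u - 7 * ln (1 + u)) + (osc_log M - 7 * ln (1 + M))
      - (osc_log (M + u) - 7 * ln (1 + (M + u)))) \<le> exp (4 + 7 * ln 2) * exp (-2 * ln (1 + u))"
    unfolding exp_add[symmetric] exp_le_cancel_iff .
  also have "exp (-2 * ln (1 + u)) = pareto (1 + u)"
    using u by (simp add: pareto_shift)
  finally show ?thesis
    using M u by (simp add: osc_tail_def exp_add exp_diff)
qed

definition p1 :: "real \<Rightarrow> real" where
  "p1 t = osc_tail t / osc_mass"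

lemma p1_measurable [measurable]: "p1 \<in> borel_measurable borel"
  unfolding p1_def by measurable

lemma p1_pos: "0 \<le> x \<Longrightarrow> 0 < p1 x"
  using osc_tail_pos osc_mass_pos by (simp add: p1_def)

lemma p1_nonneg: "0 \<le> p1 t"
  using osc_tail_nonneg[of t] osc_mass_pos by (simp add: p1_def)

lemma density_p1: "density_fun p1"
  using osc_mass_pos integrable_osc_tail osc_tail_nonneg
  by (simp add: density_fun_def p1_def[abs_def] osc_mass_def)

lemma p1_in_S_d: "p1 \<in> S_d"
proof (rule dominated_long_tail.in_S_d[where e = "\<lambda>u. exp (4 + 7 * ln 2) / osc_mass * pareto (1 + u)"],
    unfold_locales)
  show "integrable lborel (\<lambda>u. exp (4 + 7 * ln 2) / osc_mass * pareto (1 + u))"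
    using integrable_pareto_affine[of 1 1] by simp
  show "p1 u * p1 (x - u) / p1 x \<le> exp (4 + 7 * ln 2) / osc_mass * pareto (1 + u)"
    if "0 \<le> u" "2 * u \<le> x" for x u
    using osc_tail_conv_majorant[OF that] osc_mass_pos by (simp add: p1_def field_simps)
  show "((\<lambda>x. p1 (x + a) / p1 x) \<longlongrightarrow> 1) at_top" for a
    using osc_tail_long_tailed[of a] osc_mass_pos by (simp add: p1_def)
  show "p1 u = 0" if "u < 0" for u
    using that by (simp add: p1_def osc_tail_def)
qed (simp_all add: density_p1 p1_pos)

section \<open>Adding a heavy left tail\<close>

definition left_tail :: "real \<Rightarrow> real" where
  "left_tail t = pareto (1 - t)"

definition p2 :: "real \<Rightarrow> real" where
  "p2 t = p1 t / 2 + left_tail t / 2"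

lemma left_tail_vanishes: "0 < x \<Longrightarrow> left_tail x = 0"
  by (simp add: left_tail_def pareto_def)

lemma p2_nonneg: "0 \<le> p2 t"
  using p1_nonneg pareto_nonneg by (simp add: p2_def left_tail_def)

lemma abs_p2_le: "\<bar>p2 t\<bar> \<le> 1 / osc_mass + 1"
proof -
  have "osc_tail t / osc_mass \<le> 1 / osc_mass"
    using osc_tail_le_1[of t] osc_mass_pos by (simp add: divide_right_mono)
  then show ?thesis
    using pareto_le_1[of "1 - t"] p2_nonneg[of t] by (simp add: p2_def p1_def left_tail_def)
qed

lemma density_p2: "density_fun p2"
proof -
  have left_tail: "integrable lborel left_tail" "integral\<^sup>L lborel left_tail = 1"
    using integrable_pareto_affine[of "-1" 1] lborel_integral_real_affine[of "-1" pareto 1]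
    by (simp_all add: left_tail_def[abs_def] integral_pareto)
  moreover have "integrable lborel p1" "integral\<^sup>L lborel p1 = 1"
    using density_p1 by (simp_all add: density_fun_def)
  ultimately have "integrable lborel p2" "integral\<^sup>L lborel p2 = 1"
    unfolding p2_def[abs_def] by simp_all
  then show ?thesis
    using p2_nonneg by (simp add: density_fun_def)
qed

lemma p2_asymp_eq: "asymp_eq p2 (\<lambda>x. 1/2 * p1 x)"
  unfolding asymp_eq_def
proof (rule Lim_transform_eventually[OF tendsto_const])
  show "\<forall>\<^sub>F x in at_top. 1 = p2 x / (1/2 * p1 x)"
    using eventually_gt_at_top[of 0]
  proof eventually_elim
    case (elim x)
    then show ?case
      using p1_pos[of x] by (simp add: p2_def left_tail_vanishes)
  qed
qed

lemma osc_tail_at_trough: "osc_tail ((2 * pi * real n)\<^sup>2) = (1 + (2 * pi * real n)\<^sup>2) powr -7"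
proof -
  have "osc ((2 * pi * real n)\<^sup>2) = 0"
    using cos_integer_2pi[of "real n"] by (simp add: osc_def)
  moreover have "0 < 1 + (2 * pi * real n)\<^sup>2"
    by (simp add: add_pos_nonneg)
  ultimately show ?thesis
    by (simp add: osc_tail_def osc_log_def powr_def)
qed

lemma osc_tail_near_peak:
  assumes "(2 * pi * real n + 2 * pi / 3)\<^sup>2 \<le> t" "t \<le> (2 * pi * real n + 4 * pi / 3)\<^sup>2"
  shows "(1 + (2 * pi * real n + 4 * pi / 3)\<^sup>2) powr (-25/4) \<le> osc_tail t"
proof -
  have t: "0 \<le> t"
    using assms(1) by (metis zero_le_power2 order_trans)
  have "2 * pi * real n + 2 * pi / 3 \<le> sqrt t" "sqrt t \<le> 2 * pi * real n + 4 * pi / 3"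
    using real_sqrt_le_mono[OF assms(1)] real_sqrt_le_mono[OF assms(2)] by simp_all
  then have "cos (sqrt t - 2 * real n * pi) \<le> - 1/2"
    by (intro cos_le_minus_half) (simp_all add: algebra_simps)
  then have "3/4 \<le> osc t"
    by (simp add: osc_def cos_diff)
  then have "3/4 * ln (1 + t) \<le> osc_log t"
    using t unfolding osc_log_def by (intro mult_right_mono) auto
  then have "-25/4 * ln (1 + t) \<le> osc_log t - 7 * ln (1 + t)"
    by linarith
  then have "(1 + t) powr (-25/4) \<le> osc_tail t"
    using t by (simp add: osc_tail_def powr_def)
  moreover have "(1 + (2 * pi * real n + 4 * pi / 3)\<^sup>2) powr (-25/4) \<le> (1 + t) powr (-25/4)"
    using assms t by (intro powr_mono2') auto
  ultimately show ?thesis by simp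
qed

definition trough_bound :: "real \<Rightarrow> real" where
  "trough_bound N = ((2*pi*N + 4*pi/3)\<^sup>2 - (2*pi*N + 2*pi/3)\<^sup>2) / 4
     * (1 + ((2*pi*N + 4*pi/3)\<^sup>2 - (2*pi*N)\<^sup>2)) powr -2
     * (1 + (2*pi*N + 4*pi/3)\<^sup>2) powr (-25/4) * (1 + (2*pi*N)\<^sup>2) powr 7"

text \<open>Only the convolution mass with \<open>x - u\<close> in the peak \<open>[a\<^sup>2, b\<^sup>2]\<close> following the trough \<open>x\<close> is
  counted; there \<open>u = x - (x - u)\<close> lies in the left tail.\<close>

lemma conv_ratio_p2_at_trough:
  assumes "1 \<le> n"
  shows "trough_bound (real n)
    \<le> conv p2 p2 ((2 * pi * real n)\<^sup>2) / (2 * p2 ((2 * pi * real n)\<^sup>2))"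
proof -
  define x a b where "x = (2 * pi * real n)\<^sup>2"
    and "a = 2 * pi * real n + 2 * pi / 3" and "b = 2 * pi * real n + 4 * pi / 3"
  define peak tail where "peak = (1 + b\<^sup>2) powr (-25/4) / (2 * osc_mass)"
    and "tail = (1 + (b\<^sup>2 - x)) powr -2 / 2"
  have x: "0 < x" "x \<le> a\<^sup>2" and ab: "a\<^sup>2 \<le> b\<^sup>2"
    using assms pi_gt_zero by (auto simp: x_def a_def b_def intro!: power_mono)
  have box: "peak * tail \<le> p2 (x - u) * p2 u" if "x - b\<^sup>2 \<le> u" "u \<le> x - a\<^sup>2" for u
  proof -
    have "(1 + (b\<^sup>2 - x)) powr -2 \<le> left_tail u"
      using that x by (simp add: left_tail_def pareto_def powr_mono2')
    then have tail_le: "tail \<le> p2 u"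
      using p1_nonneg[of u] by (simp add: p2_def tail_def)
    have "(1 + b\<^sup>2) powr (-25/4) \<le> osc_tail (x - u)"
      using osc_tail_near_peak[of n "x - u"] that by (simp add: a_def b_def)
    then have "peak \<le> p1 (x - u) / 2"
      using osc_mass_pos by (simp add: peak_def p1_def field_simps)
    also have "\<dots> \<le> p2 (x - u)"
      using pareto_nonneg by (simp add: p2_def left_tail_def)
    finally show ?thesis
      using tail_le p2_nonneg by (intro mult_mono) (simp_all add: tail_def)
  qed
  have lower: "peak * tail * (b\<^sup>2 - a\<^sup>2) \<le> conv p2 p2 x"
    using conv_ge_on_interval[of p2 "1 / osc_mass + 1" "x - b\<^sup>2" "x - a\<^sup>2" "peak * tail" x] abs_p2_le p2_nonneg box
      density_p2 ab
    by (simp add: density_fun_def)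
  have "osc_tail x = (1 + x) powr -7"
    unfolding x_def by (rule osc_tail_at_trough)
  then have "2 * p2 x = inverse ((1 + x) powr 7) / osc_mass"
    using x by (simp add: p2_def p1_def left_tail_vanishes powr_minus)
  then have ratio: "conv p2 p2 x / (2 * p2 x) = conv p2 p2 x * (osc_mass * (1 + x) powr 7)"
    using x osc_mass_pos by (simp add: divide_inverse mult_ac)
  have "trough_bound (real n) = peak * tail * (b\<^sup>2 - a\<^sup>2) * (osc_mass * (1 + x) powr 7)"
    using osc_mass_pos by (simp add: peak_def tail_def trough_bound_def x_def a_def b_def)
  also have "\<dots> \<le> conv p2 p2 x / (2 * p2 x)"
    unfolding ratio using lower osc_mass_pos by (intro mult_right_mono) auto
  finally show ?thesis
    by (simp only: x_def)
qed

lemma p2_not_in_S_d: "p2 \<notin> S_d"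
proof (rule not_in_S_d_if_conv_ratio_unbounded[where x = "\<lambda>n. (2 * pi * real n)\<^sup>2"])
  have "filterlim trough_bound at_top at_top"
    unfolding trough_bound_def by real_asymp
  then have "filterlim (\<lambda>n. trough_bound (real n)) at_top sequentially"
    using filterlim_real_sequentially by (rule filterlim_compose)
  then show "filterlim (\<lambda>n. conv p2 p2 ((2 * pi * real n)\<^sup>2) / (2 * p2 ((2 * pi * real n)\<^sup>2)))
      at_top sequentially"
  proof (rule filterlim_at_top_mono)
    show "\<forall>\<^sub>F n in sequentially. trough_bound (real n)
        \<le> conv p2 p2 ((2 * pi * real n)\<^sup>2) / (2 * p2 ((2 * pi * real n)\<^sup>2))"
      using eventually_ge_at_top[of "1::nat"] by eventually_elim (erule conv_ratio_p2_at_trough)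
  qed
  have "filterlim (\<lambda>N::real. (2 * pi * N)\<^sup>2) at_top at_top"
    by real_asymp
  then show "filterlim (\<lambda>n. (2 * pi * real n)\<^sup>2) at_top sequentially"
    using filterlim_real_sequentially by (rule filterlim_compose)
qed

theorem theorem1p2:
  shows "\<exists>p1 p2 (c::real). density_fun p1 \<and> density_fun p2 \<and> c > 0 \<and>
           p1 \<in> S_d \<and> p2 \<notin> S_d \<and> asymp_eq p2 (\<lambda>x. c * p1 x)"
  using density_p1 density_p2 p1_in_S_d p2_not_in_S_d p2_asymp_eq
  by (intro exI[of _ p1] exI[of _ p2] exI[of _ "1/2"]) simp

end
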